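(* Let $v>0$ and let $(a,r,s):\mathbb{R}\to\mathbb{R}^3$ be a solution, not identically constant, of $$\partial_\xi a=r,\qquad \partial_\xi r=-vr-\frac{sa}{2}+\frac{a|r|}{2},\qquad \partial_\xi s=-vs-ra$$ with $(a,r,s)(\xi)\to(a_0,0,0)$ as $\xi\to-\infty$ for some $a_0\in\mathbb{R}$. Then the trajectory is contained in $I_1\cup I_2\cup I_3\cup I_4$, where $I_1=\{r>0,\ s=2r\}$, $I_2=\{r>0,\ s=-r\}$, $I_3=\{r<0,\ s=r\}$, $I_4=\{r<0,\ s=-2r\}$. *)

theory Defs
  imports Complex_Main
begin

end

theory Submission
  imports Defs
begin

(* Since v > 0, the limit a0 satisfies a0 > -v or a0 < v. Take Phi = s + r where r >= 0 and
   Phi = s + 2r where r <= 0 in the first case, Phi = s - 2r resp. s - r in the second. On each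
   side of the line r = 0, Phi solves a scalar linear equation Phi' = k Phi, with k = -(v + a/2)
   resp. -(v + a) in the first case and k = a - v resp. a/2 - v in the second, so k < 0 near
   -infinity. Phi need not be differentiable where r changes sign, but either branch shows that
   |Phi z| exp (-L z) strictly increases leftwards near every point where k < L, and a maximum
   argument turns this into a Gronwall estimate on intervals. Taking L = 0 far to the left and
   using Phi -> 0 at -infinity, Phi vanishes there, hence everywhere. So s is determined by r on
   each side and |s| <= 2|r|; then |r'| <= C |r| locally, so r either has no zero or vanishes
   identically, and the latter would make the solution constant. *)

lemma le_left_endpoint_if_eventually_gt_at_left:
  fixes g :: "real \<Rightarrow> real"
  assumes cont: "continuous_on {lo..hi} g" and "lo \<le> hi" and "0 < g hi"
    and left: "\<And>x. lo < x \<Longrightarrow> x \<le> hi \<Longrightarrow> 0 < g x \<Longrightarrow> eventually (\<lambda>z. g x < g z) (at_left x)"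
  shows "g hi \<le> g lo"
proof -
  obtain t where t: "t \<in> {lo..hi}" and max: "\<And>y. y \<in> {lo..hi} \<Longrightarrow> g y \<le> g t"
    using continuous_attains_sup[OF compact_Icc _ cont] \<open>lo \<le> hi\<close> by auto
  have "t = lo"
  proof (rule ccontr)
    assume "t \<noteq> lo"
    with t have "lo < t" by simp
    have "0 < g t" using max[of hi] \<open>0 < g hi\<close> \<open>lo \<le> hi\<close> by simp
    then have "eventually (\<lambda>z. g t < g z \<and> z \<in> {lo<..<t}) (at_left t)"
      using left[OF \<open>lo < t\<close>] t eventually_at_left_real[OF \<open>lo < t\<close>] by (auto intro: eventually_conj)
    then obtain z where "g t < g z" "z \<in> {lo<..<t}"
      using eventually_happens'[OF trivial_limit_at_left_real] by blast
    then show False using max[of z] t by auto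
  qed
  then show ?thesis using max[of hi] \<open>lo \<le> hi\<close> by simp
qed

lemma eventually_weighted_abs_gt_at_left:
  fixes F :: "real \<Rightarrow> real"
  assumes F': "(F has_real_derivative k * F x) (at x)" and "k < L" and "F x \<noteq> 0"
  shows "eventually (\<lambda>z. \<bar>F x\<bar> * exp (- L * x) < \<bar>F z\<bar> * exp (- L * z)) (at_left x)"
proof -
  define H where "H z = sgn (F x) * F z * exp (- L * z)" for z
  have H_x: "H x = \<bar>F x\<bar> * exp (- L * x)"
    by (simp add: H_def abs_sgn mult.commute)
  have H_le: "H z \<le> \<bar>F z\<bar> * exp (- L * z)" for z
    by (cases "F x > 0") (auto simp: H_def sgn_real_def)
  have "(H has_real_derivative (k - L) * H x) (at x)"
    unfolding H_def by (auto intro!: derivative_eq_intros F' simp: algebra_simps)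
  moreover have "(k - L) * H x < 0"
    using assms by (simp add: H_x mult_neg_pos)
  ultimately obtain d where "d > 0" and dec: "\<And>h. 0 < h \<Longrightarrow> h < d \<Longrightarrow> H x < H (x - h)"
    using DERIV_neg_dec_left by blast
  then have "eventually (\<lambda>z. H x < H z) (at_left x)"
    unfolding eventually_at_left_field by (intro exI[of _ "x - d"]) (use \<open>d > 0\<close> dec[of "x - _"] in auto)
  then show ?thesis
    by eventually_elim (use H_x H_le in \<open>smt (verit)\<close>)
qed

lemma bounded_above_on_Icc:
  fixes k :: "real \<Rightarrow> real"
  assumes "\<And>x. isCont k x"
  shows "\<exists>L. \<forall>x\<in>{lo..hi}. k x < L"
proof (cases "lo \<le> hi")
  case True
  then obtain M where "\<forall>x. lo \<le> x \<and> x \<le> hi \<longrightarrow> k x \<le> M"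
    using isCont_bounded assms by blast
  then show ?thesis by (intro exI[of _ "M + 1"]) fastforce
qed auto

lemma isCont_switched:
  fixes r F1 F2 Phi :: "real \<Rightarrow> real"
  assumes Phi: "\<And>z. Phi z = (if 0 \<le> r z then F1 z else F2 z)" and r: "isCont r x"
    and F1: "0 \<le> r x \<Longrightarrow> isCont F1 x" and F2: "r x \<le> 0 \<Longrightarrow> isCont F2 x"
    and eq: "r x = 0 \<Longrightarrow> F1 x = F2 x"
  shows "isCont Phi x"
proof -
  have "(F1 \<longlongrightarrow> Phi x) (inf (at x) (principal {z. 0 \<le> r z}))"
  proof (cases "r x < 0")
    case True
    then have "eventually (\<lambda>z. r z < 0) (at x)"
      using r order_tendstoD(2) by (auto simp: isCont_def)
    then have "trivial_limit (inf (at x) (principal {z. 0 \<le> r z}))"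
      unfolding trivial_limit_def by (auto simp: eventually_inf_principal elim: eventually_mono)
    then show ?thesis by simp
  next
    case False
    then show ?thesis
      using F1 Phi[of x] by (auto simp: isCont_def intro: tendsto_mono[OF inf_le1])
  qed
  moreover have "(F2 \<longlongrightarrow> Phi x) (inf (at x) (principal {z. \<not> 0 \<le> r z}))"
  proof (cases "r x > 0")
    case True
    then have "eventually (\<lambda>z. r z > 0) (at x)"
      using r order_tendstoD(1) by (auto simp: isCont_def)
    then have "trivial_limit (inf (at x) (principal {z. \<not> 0 \<le> r z}))"
      unfolding trivial_limit_def by (auto simp: eventually_inf_principal elim: eventually_mono)
    then show ?thesis by simp
  next
    case False
    then show ?thesis
      using F2 eq Phi[of x] by (auto simp: isCont_def intro: tendsto_mono[OF inf_le1])
  qed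
  ultimately show ?thesis
    unfolding isCont_def Phi by (rule filterlim_If)
qed

lemma eventually_switched_weighted_abs_gt_at_left:
  fixes r F1 F2 Phi :: "real \<Rightarrow> real"
  assumes Phi: "\<And>z. Phi z = (if 0 \<le> r z then F1 z else F2 z)" and r: "isCont r x"
    and F1': "0 \<le> r x \<Longrightarrow> (F1 has_real_derivative k1 * F1 x) (at x)" and k1: "0 \<le> r x \<Longrightarrow> k1 < L"
    and F2': "r x \<le> 0 \<Longrightarrow> (F2 has_real_derivative k2 * F2 x) (at x)" and k2: "r x \<le> 0 \<Longrightarrow> k2 < L"
    and eq: "r x = 0 \<Longrightarrow> F1 x = F2 x" and nz: "Phi x \<noteq> 0"
  shows "eventually (\<lambda>z. \<bar>Phi x\<bar> * exp (- L * x) < \<bar>Phi z\<bar> * exp (- L * z)) (at_left x)"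
proof -
  have r_lim: "(r \<longlongrightarrow> r x) (at_left x)"
    using r by (auto simp: isCont_def intro: tendsto_mono[OF at_le])
  have "eventually (\<lambda>z. 0 \<le> r z \<longrightarrow> \<bar>Phi x\<bar> * exp (- L * x) < \<bar>F1 z\<bar> * exp (- L * z)) (at_left x)"
  proof (cases "0 \<le> r x")
    case True
    then show ?thesis
      using eventually_weighted_abs_gt_at_left[OF F1' k1] nz Phi[of x] by (auto elim: eventually_mono)
  next
    case False
    then show ?thesis
      using order_tendstoD(2)[OF r_lim, of 0] by (auto elim: eventually_mono)
  qed
  moreover have "eventually (\<lambda>z. r z \<le> 0 \<longrightarrow> \<bar>Phi x\<bar> * exp (- L * x) < \<bar>F2 z\<bar> * exp (- L * z)) (at_left x)"
  proof (cases "r x \<le> 0")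
    case True
    then have "Phi x = F2 x" using eq Phi[of x] by auto
    then show ?thesis
      using eventually_weighted_abs_gt_at_left[OF F2' k2] True nz by (auto elim: eventually_mono)
  next
    case False
    then show ?thesis
      using order_tendstoD(1)[OF r_lim, of 0] by (auto elim: eventually_mono)
  qed
  ultimately show ?thesis
    by eventually_elim (auto simp: Phi)
qed

lemma switched_weighted_abs_le:
  fixes r F1 F2 Phi k1 k2 :: "real \<Rightarrow> real"
  assumes Phi: "\<And>z. Phi z = (if 0 \<le> r z then F1 z else F2 z)" and r: "\<And>x. isCont r x"
    and cont: "continuous_on {lo..hi} Phi" and "lo \<le> hi"
    and F1': "\<And>x. 0 \<le> r x \<Longrightarrow> (F1 has_real_derivative k1 x * F1 x) (at x)"
    and F2': "\<And>x. r x \<le> 0 \<Longrightarrow> (F2 has_real_derivative k2 x * F2 x) (at x)"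
    and eq: "\<And>x. r x = 0 \<Longrightarrow> F1 x = F2 x"
    and k: "\<And>x. lo < x \<Longrightarrow> x \<le> hi \<Longrightarrow> k1 x < L \<and> k2 x < L"
  shows "\<bar>Phi hi\<bar> * exp (- L * hi) \<le> \<bar>Phi lo\<bar> * exp (- L * lo)"
proof (cases "Phi hi = 0")
  case False
  show ?thesis
  proof (rule le_left_endpoint_if_eventually_gt_at_left[where g = "\<lambda>z. \<bar>Phi z\<bar> * exp (- L * z)"])
    show "continuous_on {lo..hi} (\<lambda>z. \<bar>Phi z\<bar> * exp (- L * z))"
      by (intro continuous_intros cont)
    fix x assume "lo < x" "x \<le> hi" "0 < \<bar>Phi x\<bar> * exp (- L * x)"
    then show "eventually (\<lambda>z. \<bar>Phi x\<bar> * exp (- L * x) < \<bar>Phi z\<bar> * exp (- L * z)) (at_left x)"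
      using eventually_switched_weighted_abs_gt_at_left[OF Phi r F1' _ F2' _ eq] k by force
  qed (use False \<open>lo \<le> hi\<close> in auto)
qed simp

lemma switched_linear_vanishes:
  fixes r F1 F2 Phi k1 k2 :: "real \<Rightarrow> real"
  assumes Phi: "\<And>z. Phi z = (if 0 \<le> r z then F1 z else F2 z)" and r: "\<And>x. isCont r x"
    and F1': "\<And>x. 0 \<le> r x \<Longrightarrow> (F1 has_real_derivative k1 x * F1 x) (at x)"
    and F2': "\<And>x. r x \<le> 0 \<Longrightarrow> (F2 has_real_derivative k2 x * F2 x) (at x)"
    and eq: "\<And>x. r x = 0 \<Longrightarrow> F1 x = F2 x"
    and bounded1: "\<And>lo hi. \<exists>L. \<forall>x\<in>{lo..hi}. k1 x < L"
    and bounded2: "\<And>lo hi. \<exists>L. \<forall>x\<in>{lo..hi}. k2 x < L"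
    and neg: "eventually (\<lambda>x. k1 x < 0 \<and> k2 x < 0) at_bot"
    and lim: "(Phi \<longlongrightarrow> 0) at_bot"
  shows "Phi x = 0"
proof -
  have "continuous_on S Phi" for S
    by (intro continuous_at_imp_continuous_on ballI isCont_switched[OF Phi r])
      (auto intro: DERIV_isCont[OF F1'] DERIV_isCont[OF F2'] eq)
  then have estimate: "\<bar>Phi hi\<bar> * exp (- L * hi) \<le> \<bar>Phi lo\<bar> * exp (- L * lo)"
    if "lo \<le> hi" "\<And>x. lo < x \<Longrightarrow> x \<le> hi \<Longrightarrow> k1 x < L \<and> k2 x < L" for lo hi L
    using switched_weighted_abs_le[OF Phi r _ that(1) F1' F2' eq that(2)] by blast
  obtain T where T: "\<And>x. x \<le> T \<Longrightarrow> k1 x < 0 \<and> k2 x < 0"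
    using neg by (auto simp: eventually_at_bot_linorder)
  have vanish_below: "Phi y = 0" if "y \<le> T" for y
  proof -
    have "eventually (\<lambda>z. \<bar>Phi y\<bar> \<le> \<bar>Phi z\<bar>) at_bot"
      unfolding eventually_at_bot_linorder
      using estimate[where L = 0] T that by (intro exI[of _ y]) force
    then have "\<bar>Phi y\<bar> \<le> 0"
      by (rule tendsto_lowerbound[OF tendsto_rabs_zero[OF lim]]) simp
    then show ?thesis by simp
  qed
  show ?thesis
  proof (cases "x \<le> T")
    case False
    obtain L1 L2 where "\<forall>z\<in>{T..x}. k1 z < L1" "\<forall>z\<in>{T..x}. k2 z < L2"
      using bounded1 bounded2 by meson
    then have "\<bar>Phi x\<bar> * exp (- max L1 L2 * x) \<le> \<bar>Phi T\<bar> * exp (- max L1 L2 * T)"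
      using False by (intro estimate) (auto simp: less_max_iff_disj)
    then show ?thesis using vanish_below[of T] by (simp add: mult_le_0_iff)
  qed (use vanish_below in blast)
qed

lemma vanishes_if_abs_deriv_le:
  fixes f f' :: "real \<Rightarrow> real"
  assumes f': "\<And>z. (f has_real_derivative f' z) (at z)"
    and bound: "\<And>lo hi. \<exists>M. \<forall>z\<in>{lo..hi}. \<bar>f' z\<bar> \<le> M * \<bar>f z\<bar>"
    and "f x = 0"
  shows "f y = 0"
proof -
  obtain M where M: "\<And>z. z \<in> {min x y..max x y} \<Longrightarrow> \<bar>f' z\<bar> \<le> M * \<bar>f z\<bar>"
    using bound by blast
  define g where "g c z = (f z)\<^sup>2 * exp (c * z)" for c z
  have g': "(g c has_real_derivative (2 * f z * f' z + c * (f z)\<^sup>2) * exp (c * z)) (at z)" for c z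
    unfolding g_def by (auto intro!: derivative_eq_intros f' simp: algebra_simps)
  have ff': "\<bar>2 * f z * f' z\<bar> \<le> 2 * M * (f z)\<^sup>2" if "z \<in> {min x y..max x y}" for z
  proof -
    have "\<bar>2 * f z * f' z\<bar> = 2 * \<bar>f z\<bar> * \<bar>f' z\<bar>" by (simp add: abs_mult)
    also have "\<dots> \<le> 2 * \<bar>f z\<bar> * (M * \<bar>f z\<bar>)" using M[OF that] by (simp add: mult_left_mono)
    finally show ?thesis by (simp add: power2_eq_square algebra_simps)
  qed
  have "\<exists>c. g c y \<le> g c x"
  proof (cases "x \<le> y")
    case True
    have "g (- 2 * M) y \<le> g (- 2 * M) x"
    proof (rule DERIV_nonpos_imp_nonincreasing[OF True])
      fix z assume "x \<le> z" "z \<le> y"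
      then show "\<exists>d. (g (- 2 * M) has_real_derivative d) (at z) \<and> d \<le> 0"
        using g' ff'[of z] by (intro exI conjI) (auto intro!: mult_nonpos_nonneg)
    qed
    then show ?thesis by blast
  next
    case False
    have "g (2 * M) y \<le> g (2 * M) x"
    proof (rule DERIV_nonneg_imp_nondecreasing[of y x])
      fix z assume "y \<le> z" "z \<le> x"
      then show "\<exists>d. (g (2 * M) has_real_derivative d) (at z) \<and> 0 \<le> d"
        using g' ff'[of z] False by (intro exI conjI) auto
    qed (use False in auto)
    then show ?thesis by blast
  qed
  then show ?thesis
    using \<open>f x = 0\<close> by (auto simp: g_def mult_le_0_iff)
qed

locale wave_ode =
  fixes v :: real and a r s :: "real \<Rightarrow> real"
  assumes v_pos: "v > 0"
    and da: "\<And>\<xi>. (a has_real_derivative r \<xi>) (at \<xi>)"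
    and dr: "\<And>\<xi>. (r has_real_derivative (- v * r \<xi> - s \<xi> * a \<xi> / 2 + a \<xi> * \<bar>r \<xi>\<bar> / 2)) (at \<xi>)"
    and ds: "\<And>\<xi>. (s has_real_derivative (- v * s \<xi> - r \<xi> * a \<xi>)) (at \<xi>)"
begin

lemma isCont_a: "isCont a x" and isCont_r: "isCont r x"
  using DERIV_isCont da dr by blast+

lemma s_eq_if_lim_a_gt:
  assumes lim_a: "(a \<longlongrightarrow> a0) at_bot" and lim_r: "(r \<longlongrightarrow> 0) at_bot" and lim_s: "(s \<longlongrightarrow> 0) at_bot"
    and "- v < a0"
  shows "s x = (if 0 \<le> r x then - r x else - 2 * r x)"
proof -
  have "(if 0 \<le> r x then s x + r x else s x + 2 * r x) = 0"
  proof (rule switched_linear_vanishes[where Phi = "\<lambda>z. if 0 \<le> r z then s z + r z else s z + 2 * r z"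
        and r = r and ?F1.0 = "\<lambda>z. s z + r z" and ?F2.0 = "\<lambda>z. s z + 2 * r z"
        and ?k1.0 = "\<lambda>z. - (v + a z / 2)" and ?k2.0 = "\<lambda>z. - (v + a z)"])
    show "((\<lambda>z. s z + r z) has_real_derivative - (v + a x / 2) * (s x + r x)) (at x)" if "0 \<le> r x" for x
      using that by (auto intro!: derivative_eq_intros ds dr simp: algebra_simps)
    show "((\<lambda>z. s z + 2 * r z) has_real_derivative - (v + a x) * (s x + 2 * r x)) (at x)" if "r x \<le> 0" for x
      using that by (auto intro!: derivative_eq_intros ds dr simp: algebra_simps abs_of_nonpos)
    show "eventually (\<lambda>x. - (v + a x / 2) < 0 \<and> - (v + a x) < 0) at_bot"
      using order_tendstoD(1)[OF lim_a \<open>- v < a0\<close>] v_pos by (auto elim: eventually_mono)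
    show "((\<lambda>z. if 0 \<le> r z then s z + r z else s z + 2 * r z) \<longlongrightarrow> 0) at_bot"
      by (rule filterlim_If; rule tendsto_mono[OF inf_le1]) (auto intro!: tendsto_eq_intros lim_r lim_s)
  qed (auto intro!: isCont_r bounded_above_on_Icc continuous_intros isCont_a)
  then show ?thesis by (auto split: if_splits)
qed

lemma s_eq_if_lim_a_lt:
  assumes lim_a: "(a \<longlongrightarrow> a0) at_bot" and lim_r: "(r \<longlongrightarrow> 0) at_bot" and lim_s: "(s \<longlongrightarrow> 0) at_bot"
    and "a0 < v"
  shows "s x = (if 0 \<le> r x then 2 * r x else r x)"
proof -
  have "(if 0 \<le> r x then s x - 2 * r x else s x - r x) = 0"
  proof (rule switched_linear_vanishes[where Phi = "\<lambda>z. if 0 \<le> r z then s z - 2 * r z else s z - r z"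
        and r = r and ?F1.0 = "\<lambda>z. s z - 2 * r z" and ?F2.0 = "\<lambda>z. s z - r z"
        and ?k1.0 = "\<lambda>z. a z - v" and ?k2.0 = "\<lambda>z. a z / 2 - v"])
    show "((\<lambda>z. s z - 2 * r z) has_real_derivative (a x - v) * (s x - 2 * r x)) (at x)" if "0 \<le> r x" for x
      using that by (auto intro!: derivative_eq_intros ds dr simp: algebra_simps)
    show "((\<lambda>z. s z - r z) has_real_derivative (a x / 2 - v) * (s x - r x)) (at x)" if "r x \<le> 0" for x
      using that by (auto intro!: derivative_eq_intros ds dr simp: field_simps abs_of_nonpos)
    show "eventually (\<lambda>x. a x - v < 0 \<and> a x / 2 - v < 0) at_bot"
      using order_tendstoD(2)[OF lim_a \<open>a0 < v\<close>] v_pos by (auto elim: eventually_mono)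
    show "((\<lambda>z. if 0 \<le> r z then s z - 2 * r z else s z - r z) \<longlongrightarrow> 0) at_bot"
      by (rule filterlim_If; rule tendsto_mono[OF inf_le1]) (auto intro!: tendsto_eq_intros lim_r lim_s)
  qed (auto intro!: isCont_r bounded_above_on_Icc continuous_intros isCont_a)
  then show ?thesis by (auto split: if_splits)
qed

lemma r_nonzero:
  assumes nonconst: "\<not> (\<exists>c. \<forall>\<xi>. (a \<xi>, r \<xi>, s \<xi>) = c)" and s_le: "\<And>z. \<bar>s z\<bar> \<le> 2 * \<bar>r z\<bar>"
  shows "r x \<noteq> 0"
proof
  assume "r x = 0"
  have r_zero: "r y = 0" for y
  proof (rule vanishes_if_abs_deriv_le[OF dr _ \<open>r x = 0\<close>])
    fix lo hi
    obtain A where A: "\<forall>z\<in>{lo..hi}. \<bar>a z\<bar> < A"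
      using bounded_above_on_Icc[OF isCont_rabs[OF isCont_a]] by blast
    have "\<bar>- v * r z - s z * a z / 2 + a z * \<bar>r z\<bar> / 2\<bar> \<le> (v + 3 / 2 * A) * \<bar>r z\<bar>"
      if "z \<in> {lo..hi}" for z
    proof -
      have "\<bar>- v * r z - s z * a z / 2 + a z * \<bar>r z\<bar> / 2\<bar>
          \<le> \<bar>v * r z\<bar> + \<bar>s z * a z / 2\<bar> + \<bar>a z * \<bar>r z\<bar> / 2\<bar>"
        by arith
      also have "\<dots> = v * \<bar>r z\<bar> + \<bar>s z\<bar> * \<bar>a z\<bar> / 2 + \<bar>a z\<bar> * \<bar>r z\<bar> / 2"
        using v_pos by (simp add: abs_mult)
      also have "\<dots> \<le> v * \<bar>r z\<bar> + 2 * \<bar>r z\<bar> * A / 2 + A * \<bar>r z\<bar> / 2"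
        using s_le[of z] A that v_pos by (intro add_mono mult_mono divide_right_mono order_refl) (auto intro: less_imp_le)
      finally show ?thesis by (simp add: algebra_simps)
    qed
    then show "\<exists>M. \<forall>z\<in>{lo..hi}. \<bar>- v * r z - s z * a z / 2 + a z * \<bar>r z\<bar> / 2\<bar> \<le> M * \<bar>r z\<bar>"
      by blast
  qed
  have "a y = a x" for y
    using DERIV_isconst_all da r_zero by metis
  moreover have "s y = 0" for y
    using s_le[of y] r_zero[of y] by simp
  ultimately have "\<forall>\<xi>. (a \<xi>, r \<xi>, s \<xi>) = (a x, 0, 0)"
    using r_zero by simp
  with nonconst show False by blast
qed

end

theorem lemma5:
  fixes v a0 :: real and a r s :: "real \<Rightarrow> real"
  assumes v_pos: "v > 0"
    and da: "\<And>\<xi>. (a has_real_derivative r \<xi>) (at \<xi>)"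
    and dr: "\<And>\<xi>. (r has_real_derivative (- v * r \<xi> - s \<xi> * a \<xi> / 2 + a \<xi> * \<bar>r \<xi>\<bar> / 2)) (at \<xi>)"
    and ds: "\<And>\<xi>. (s has_real_derivative (- v * s \<xi> - r \<xi> * a \<xi>)) (at \<xi>)"
    and nonconst: "\<not> (\<exists>c. \<forall>\<xi>. (a \<xi>, r \<xi>, s \<xi>) = c)"
    and lim_a: "(a \<longlongrightarrow> a0) at_bot"
    and lim_r: "(r \<longlongrightarrow> 0) at_bot"
    and lim_s: "(s \<longlongrightarrow> 0) at_bot"
  shows "\<forall>\<xi>. (r \<xi> > 0 \<and> s \<xi> = 2 * r \<xi>) \<or> (r \<xi> > 0 \<and> s \<xi> = - r \<xi>)
            \<or> (r \<xi> < 0 \<and> s \<xi> = r \<xi>) \<or> (r \<xi> < 0 \<and> s \<xi> = - 2 * r \<xi>)"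
proof -
  interpret wave_ode v a r s
    using v_pos da dr ds by unfold_locales
  consider "- v < a0" | "a0 < v"
    using v_pos by linarith
  then show ?thesis
  proof cases
    case 1
    then have s: "s \<xi> = (if 0 \<le> r \<xi> then - r \<xi> else - 2 * r \<xi>)" for \<xi>
      using s_eq_if_lim_a_gt lim_a lim_r lim_s by blast
    then have "r \<xi> \<noteq> 0" for \<xi>
      by (intro r_nonzero[OF nonconst]) (simp add: abs_if)
    with s show ?thesis by (metis linorder_neqE_linordered_idom order_less_imp_le not_le)
  next
    case 2
    then have s: "s \<xi> = (if 0 \<le> r \<xi> then 2 * r \<xi> else r \<xi>)" for \<xi>
      using s_eq_if_lim_a_lt lim_a lim_r lim_s by blast
    then have "r \<xi> \<noteq> 0" for \<xi>
      by (intro r_nonzero[OF nonconst]) (simp add: abs_if)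
    with s show ?thesis by (metis linorder_neqE_linordered_idom order_less_imp_le not_le)
  qed
qed

end
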